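(* Consider the uniform Qs predictor with queue capacity $a:=\mathrm{qcap}$, an integer $a\ge2$, processing an arbitrary sequence of items. For items $i$ whose queue has exactly $a$ cells, the estimate is $Q(i)=(a-1)/Y_i$ with $Y_i:=\sum_{0\le j<|q(i)|}c_j-1$, and $Q(i)=0$ for all other items. Then at every time $t\ge1$ and for every integer $k>1$, $N(Q^{(t)},1/k)\le k-1$, where $N(Q,p):=|\{i:Q(i)>p\}|$.
   Context: The Qs predictor keeps a map from items to queues of positive integer counts ("cells"), the newest cell being $c_0$, older ones $c_1,c_2,\dots$; each queue holds at most $\mathrm{qcap}$ cells. At each time $t$ it outputs estimates $Q^{(t)}$, then observes $o^{(t)}$ and updates: if $o^{(t)}$ has no queue, an empty queue is created; the queue of $o^{(t)}$ gets a positive update (its size grows by one if below capacity; all existing cells shift one position older, the oldest being discarded if at capacity; a new cell $c_0=1$ is created), and every other existing queue gets a negative update ($c_0$ incremented by $1$). Items may occasionally be removed from the map (pruning). The "uniform" variant outputs a positive estimate for an item only once its queue has reached capacity $\mathrm{qcap}$. *)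

theory Defs
  imports Complex_Main
begin

text \<open>State of the Qs predictor: a partial map from items to queues of cells.
  A queue is a list, newest cell c_0 first.\<close>
type_synonym 'a qs_state = "'a \<Rightarrow> nat list option"

definition qs_init :: "'a qs_state" where
  "qs_init = (\<lambda>_. None)"

definition pos_update :: "nat \<Rightarrow> nat list \<Rightarrow> nat list" where
  "pos_update qcap q = 1 # (if length q < qcap then q else butlast q)"

fun neg_update :: "nat list \<Rightarrow> nat list" where
  "neg_update [] = []"
| "neg_update (c # cs) = Suc c # cs"

definition qs_update :: "nat \<Rightarrow> 'a \<Rightarrow> 'a qs_state \<Rightarrow> 'a qs_state" where
  "qs_update qcap ob S = (\<lambda>x.
     if x = ob then Some (pos_update qcap (case S ob of None \<Rightarrow> [] | Some q \<Rightarrow> q))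
     else map_option neg_update (S x))"

definition qs_prune :: "'a set \<Rightarrow> 'a qs_state \<Rightarrow> 'a qs_state" where
  "qs_prune P S = (\<lambda>x. if x \<in> P then None else S x)"

fun qs_state :: "nat \<Rightarrow> (nat \<Rightarrow> 'a) \<Rightarrow> (nat \<Rightarrow> 'a set) \<Rightarrow> nat \<Rightarrow> 'a qs_state" where
  "qs_state qcap obs prn 0 = qs_init"
| "qs_state qcap obs prn (Suc n) =
     qs_prune (prn (Suc n)) (qs_update qcap (obs (Suc n)) (qs_state qcap obs prn n))"

definition uniform_estimate :: "nat \<Rightarrow> 'a qs_state \<Rightarrow> 'a \<Rightarrow> real" where
  "uniform_estimate qcap S i = (case S i of
      None \<Rightarrow> 0
    | Some q \<Rightarrow> if length q = qcap
                then (real qcap - 1) / (real (sum_list q) - 1) else 0)"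

text \<open>Estimate output at time t (t \<ge> 1), before observing obs t.\<close>
definition Q_at :: "nat \<Rightarrow> (nat \<Rightarrow> 'a) \<Rightarrow> (nat \<Rightarrow> 'a set) \<Rightarrow> nat \<Rightarrow> 'a \<Rightarrow> real" where
  "Q_at qcap obs prn t = uniform_estimate qcap (qs_state qcap obs prn (t - 1))"

definition N_count :: "('a \<Rightarrow> real) \<Rightarrow> real \<Rightarrow> nat" where
  "N_count Q p = card {i. Q i > p}"

end

theory Submission
  imports Defs
begin

text \<open>After n observations, the partial sums c_0 + ... + c_j of the queue of an
  item x are lags at which x was observed: obs (n + 1 - (c_0 + ... + c_j)) = x.
  Positive cells make these lags strictly increasing, so a full queue of a cells
  exhibits a - 1 distinct observations of x within the last Y_x = c_0 + ... + c_(a-1) - 1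
  steps. An estimate above 1/k bounds Y_x by k(a - 1) - 1, and as each step
  observes a single item, fewer than k items can be that frequent.\<close>

definition cell_lag :: "nat list \<Rightarrow> nat \<Rightarrow> nat" where
  "cell_lag q j = sum_list (take (Suc j) q)"

lemma cell_lag_Cons_0 [simp]: "cell_lag (c # q) 0 = c"
  by (simp add: cell_lag_def)

lemma cell_lag_Cons_Suc [simp]: "cell_lag (c # q) (Suc j) = c + cell_lag q j"
  by (simp add: cell_lag_def)

lemma cell_lag_last: "length q = Suc m \<Longrightarrow> cell_lag q m = sum_list q"
  by (simp add: cell_lag_def)

lemma cell_lag_take: "j < m \<Longrightarrow> cell_lag (take m q) j = cell_lag q j"
  by (simp add: cell_lag_def min_absorb1)

lemma cell_lag_ge:
  assumes "\<forall>c\<in>set q. 0 < c" and "j < length q"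
  shows "Suc j \<le> cell_lag q j"
  using assms
proof (induction q arbitrary: j)
  case (Cons c q)
  show ?case
  proof (cases j)
    case (Suc j')
    then have "Suc j' \<le> cell_lag q j'"
      using Cons by simp
    then show ?thesis
      using Cons.prems Suc by simp
  qed (use Cons.prems in simp)
qed simp

lemma cell_lag_strict_mono_on:
  assumes "\<forall>c\<in>set q. 0 < c"
  shows "strict_mono_on {..<length q} (cell_lag q)"
proof (rule strict_mono_onI)
  fix i j
  assume "i \<in> {..<length q}" "j \<in> {..<length q}" "i < j"
  then show "cell_lag q i < cell_lag q j"
    using assms
  proof (induction q arbitrary: i j)
    case (Cons c q)
    obtain j' where j: "j = Suc j'"
      using \<open>i < j\<close> by (cases j) simp_all
    show ?case
    proof (cases i)
      case 0
      have "0 < cell_lag q j'"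
        using cell_lag_ge[of q j'] Cons.prems j by simp
      then show ?thesis
        using 0 j by simp
    next
      case (Suc i')
      then show ?thesis
        using Cons j by simp
    qed
  qed simp
qed

definition records_observations :: "(nat \<Rightarrow> 'a) \<Rightarrow> nat \<Rightarrow> 'a \<Rightarrow> nat list \<Rightarrow> bool" where
  "records_observations obs n x q \<longleftrightarrow>
     (\<forall>c\<in>set q. 0 < c) \<and> (\<forall>j<length q. obs (Suc n - cell_lag q j) = x)"

lemma records_observations_Nil: "records_observations obs n x []"
  by (simp add: records_observations_def)

lemma records_observations_take:
  "records_observations obs n x q \<Longrightarrow> records_observations obs n x (take m q)"
  by (auto simp: records_observations_def cell_lag_take dest: in_set_takeD)

lemma records_observations_pos_update:
  assumes "records_observations obs n x q" and "obs (Suc n) = x"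
  shows "records_observations obs (Suc n) x (pos_update a q)"
proof -
  have "records_observations obs n x (if length q < a then q else butlast q)"
    using records_observations_take[OF assms(1), of "length q - 1"] assms(1)
    by (simp add: butlast_conv_take)
  then show ?thesis
    using assms(2) by (auto simp: records_observations_def pos_update_def less_Suc_eq_0_disj)
qed

lemma records_observations_neg_update:
  assumes "records_observations obs n x q"
  shows "records_observations obs (Suc n) x (neg_update q)"
proof (cases q)
  case (Cons c cs)
  have "cell_lag (Suc c # cs) j = Suc (cell_lag (c # cs) j)" for j
    by (cases j) simp_all
  then show ?thesis using assms Cons by (simp add: records_observations_def)
qed (simp add: records_observations_Nil)

lemma qs_state_records_observations:
  "qs_state a obs prn n x = Some q \<Longrightarrow> records_observations obs n x q"
proof (induction n arbitrary: x q)
  case 0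
  then show ?case by (simp add: qs_init_def)
next
  case (Suc n)
  let ?S = "qs_state a obs prn n"
  show ?case
  proof (cases "x = obs (Suc n)")
    case True
    then have "q = pos_update a (case ?S x of None \<Rightarrow> [] | Some q' \<Rightarrow> q')"
      using Suc.prems by (simp add: qs_prune_def qs_update_def split: if_splits)
    moreover have "records_observations obs n x (case ?S x of None \<Rightarrow> [] | Some q' \<Rightarrow> q')"
      using Suc.IH by (simp add: records_observations_Nil split: option.split)
    ultimately show ?thesis using True records_observations_pos_update by metis
  next
    case False
    then obtain q' where "?S x = Some q'" and "q = neg_update q'"
      using Suc.prems by (auto simp: qs_prune_def qs_update_def split: if_splits)
    then show ?thesis using Suc.IH records_observations_neg_update by metis
  qed
qed

lemma records_observations_card_window:
  assumes "records_observations obs n x q"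
  shows "length q - 1 \<le> card {d \<in> {1..<sum_list q}. obs (Suc n - d) = x}"
proof (cases q rule: rev_cases)
  case (snoc p c)
  have pos: "\<forall>c\<in>set q. 0 < c" and obs: "\<forall>j<length q. obs (Suc n - cell_lag q j) = x"
    using assms by (auto simp: records_observations_def)
  have last: "cell_lag q (length p) = sum_list q"
    using snoc by (simp add: cell_lag_last)
  have mono: "strict_mono_on {..<length q} (cell_lag q)"
    using pos by (rule cell_lag_strict_mono_on)
  then have "inj_on (cell_lag q) {..<length p}"
    using snoc by (auto intro: inj_on_subset strict_mono_on_imp_inj_on)
  then have "length q - 1 = card (cell_lag q ` {..<length p})"
    using snoc by (simp add: card_image)
  also have "\<dots> \<le> card {d \<in> {1..<sum_list q}. obs (Suc n - d) = x}"
  proof (rule card_mono)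
    show "cell_lag q ` {..<length p} \<subseteq> {d \<in> {1..<sum_list q}. obs (Suc n - d) = x}"
    proof
      fix d
      assume "d \<in> cell_lag q ` {..<length p}"
      then obtain j where j: "j < length p" and d: "d = cell_lag q j"
        by blast
      have "1 \<le> d"
        using cell_lag_ge[OF pos, of j] j snoc d by simp
      moreover have "d < sum_list q"
        using strict_mono_onD[OF mono, of j "length p"] j snoc d last by simp
      moreover have "obs (Suc n - d) = x"
        using obs j snoc d by simp
      ultimately show "d \<in> {d \<in> {1..<sum_list q}. obs (Suc n - d) = x}"
        by simp
    qed
  qed simp
  finally show ?thesis .
qed simp

lemma ratio_gt_inverse_imp_le:
  fixes a s k :: nat
  assumes "1 \<le> a" and "0 < k" and "(real a - 1) / (real s - 1) > 1 / real k"
  shows "s \<le> k * (a - 1)"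
proof -
  have "real s - 1 > 0"
  proof (rule ccontr)
    assume "\<not> real s - 1 > 0"
    then have "(real a - 1) / (real s - 1) \<le> 0"
      using assms(1) by (simp add: divide_nonneg_nonpos)
    moreover have "0 < 1 / real k"
      using assms(2) by simp
    ultimately show False
      using assms(3) by linarith
  qed
  then have "real s - 1 < real k * (real a - 1)"
    using assms by (simp add: field_simps)
  also have "\<dots> = real (k * (a - 1))"
    using assms(1) by (simp add: of_nat_diff)
  finally show ?thesis
    by linarith
qed

lemma card_mult_le_if_fibres_ge:
  assumes "finite W" and "\<And>x. x \<in> G \<Longrightarrow> m \<le> card {d \<in> W. f d = x}"
  shows "card G * m \<le> card W"
proof (cases "m = 0")
  case False
  have "G \<subseteq> f ` W"
  proof
    fix x
    assume "x \<in> G"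
    then have "{d \<in> W. f d = x} \<noteq> {}"
      using assms(2)[OF \<open>x \<in> G\<close>] False by (metis card.empty le_zero_eq)
    then show "x \<in> f ` W"
      by blast
  qed
  then have "finite G"
    using assms(1) finite_subset by blast
  have "card G * m = (\<Sum>x\<in>G. m)"
    by simp
  also have "\<dots> \<le> (\<Sum>x\<in>G. card {d \<in> W. f d = x})"
    using assms(2) by (rule sum_mono)
  also have "\<dots> = card (\<Union>x\<in>G. {d \<in> W. f d = x})"
    using \<open>finite G\<close> assms(1) by (intro card_UN_disjoint[symmetric]) auto
  also have "\<dots> \<le> card W"
    using assms(1) by (intro card_mono) auto
  finally show ?thesis .
qed simp

theorem lemma14:
  fixes a :: nat and obs :: "nat \<Rightarrow> 'a" and prn :: "nat \<Rightarrow> 'a set"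
    and t :: nat and k :: nat
  assumes "a \<ge> 2" and "t \<ge> 1" and "k > 1"
  shows "N_count (Q_at a obs prn t) (1 / real k) \<le> k - 1"
proof -
  define n where "n = t - 1"
  define G where "G = {i. Q_at a obs prn t i > 1 / real k}"
  have "a - 1 \<le> card {d \<in> {1..<k * (a - 1)}. obs (Suc n - d) = x}" if "x \<in> G" for x
  proof -
    obtain q where q: "qs_state a obs prn n x = Some q" "length q = a"
      and heavy: "(real a - 1) / (real (sum_list q) - 1) > 1 / real k"
      using \<open>x \<in> G\<close> assms(3)
      by (auto simp: G_def Q_at_def n_def uniform_estimate_def split: option.splits if_splits)
    have "sum_list q \<le> k * (a - 1)"
      using ratio_gt_inverse_imp_le[OF _ _ heavy] assms by simp
    then have window: "{d \<in> {1..<sum_list q}. obs (Suc n - d) = x}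
        \<subseteq> {d \<in> {1..<k * (a - 1)}. obs (Suc n - d) = x}"
      by auto
    have "a - 1 \<le> card {d \<in> {1..<sum_list q}. obs (Suc n - d) = x}"
      using records_observations_card_window[OF qs_state_records_observations[OF q(1)]] q(2)
      by simp
    also have "\<dots> \<le> card {d \<in> {1..<k * (a - 1)}. obs (Suc n - d) = x}"
      using window by (intro card_mono) simp_all
    finally show ?thesis .
  qed
  then have "card G * (a - 1) \<le> k * (a - 1) - 1"
    using card_mult_le_if_fibres_ge[of "{1..<k * (a - 1)}" G "a - 1" "\<lambda>d. obs (Suc n - d)"]
    by simp
  moreover have "0 < k * (a - 1)"
    using assms(1,3) by simp
  ultimately have "card G * (a - 1) < k * (a - 1)"
    by linarith
  then have "card G < k"
    by simp
  then show ?thesis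
    by (simp add: N_count_def G_def)
qed

end
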